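(* Let $-\infty\le\alpha<\beta\le+\infty$ and let $a,b,d,e$ be differentiable real functions on $(\alpha,\beta)$ with $d(x)>0$ and $e(x)>0$ there. Let $h$ be a real function, differentiable on $(\alpha,\beta)$, satisfying the Riccati equation $$h'(x)=d(x)-(b(x)-a(x))h(x)-e(x)h(x)^2,\qquad x\in(\alpha,\beta).$$ If $h(\alpha^+)>0$, then $h(x)>0$ for all $x\in(\alpha,\beta)$.
   Context: $h(\alpha^+)$ denotes the one-sided limit $\lim_{x\to\alpha^+}h(x)$. *)

theory Defs
  imports "HOL-Analysis.Analysis"
begin

definition eint :: "ereal \<Rightarrow> ereal \<Rightarrow> real set" where
  "eint \<alpha> \<beta> = {x::real. \<alpha> < ereal x \<and> ereal x < \<beta>}"

definition at_right_ereal :: "ereal \<Rightarrow> real filter" where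
  "at_right_ereal \<alpha> = (if \<alpha> = -\<infinity> then at_bot else at_right (real_of_ereal \<alpha>))"

end

theory Submission
  imports Defs
begin

text \<open>At a zero of h the Riccati equation gives h' = d > 0, so h can only cross zero upwards.
  Hence, starting from a point near \<alpha> where h > 0, a first zero of h to the right would have
  negative values of h just before it, which contradicts the intermediate value theorem.\<close>

lemma deriv_pos_at_zeros_imp_pos:
  fixes h h' :: "real \<Rightarrow> real"
  assumes "h y > 0"
    and deriv: "\<And>t. t \<in> {y..x} \<Longrightarrow> (h has_real_derivative h' t) (at t)"
    and zero_deriv: "\<And>t. t \<in> {y..x} \<Longrightarrow> h t = 0 \<Longrightarrow> h' t > 0"
  shows "\<forall>t\<in>{y..x}. h t > 0"
proof (rule ccontr)
  have cont: "continuous_on {y..x} h"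
    using deriv by (intro continuous_at_imp_continuous_on) (blast intro: DERIV_isCont)
  have zero_before: "\<exists>s\<in>{y..t}. h s = 0" if "t \<in> {y..x}" "h t \<le> 0" for t
  proof -
    have "continuous_on {y..t} h"
      using cont that(1) by (auto intro: continuous_on_subset)
    then show ?thesis
      using IVT2'[of h t 0 y] that \<open>h y > 0\<close> by force
  qed
  define Z where "Z = {t \<in> {y..x}. h t = 0}"
  assume "\<not> (\<forall>t\<in>{y..x}. h t > 0)"
  then have "Z \<noteq> {}"
    using zero_before by (force simp: Z_def)
  moreover have "closed Z"
    using continuous_closed_preimage[OF cont closed_atLeastAtMost, of "{0}"]
    by (simp add: Z_def vimage_def Int_def conj_commute)
  moreover have Z_bdd: "bdd_below Z"
    by (auto simp: Z_def bdd_below_def)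
  ultimately have "Inf Z \<in> Z"
    by (intro closed_contains_Inf)
  define z where "z = Inf Z"
  have z: "z \<in> {y..x}" "h z = 0"
    using \<open>Inf Z \<in> Z\<close> by (auto simp: Z_def z_def)
  have "y < z"
    using z \<open>h y > 0\<close> by (cases "y = z") auto
  have "(h has_real_derivative h' z) (at z)" "h' z > 0"
    using z deriv zero_deriv by auto
  from DERIV_pos_inc_left[OF this] obtain \<delta> where
    "\<delta> > 0" and \<delta>: "\<And>k. 0 < k \<Longrightarrow> k < \<delta> \<Longrightarrow> h (z - k) < h z"
    by blast
  define k where "k = min (\<delta> / 2) (z - y)"
  have "0 < k" "k < \<delta>" "z - k \<in> {y..x}"
    using \<open>\<delta> > 0\<close> \<open>y < z\<close> z(1) by (auto simp: k_def)
  with \<delta> z(2) obtain s where "s \<in> {y..z - k}" "h s = 0"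
    using zero_before[of "z - k"] by fastforce
  then have "s \<in> Z" "s < z"
    using \<open>0 < k\<close> z(1) by (auto simp: Z_def)
  then show False
    using cInf_lower[OF _ Z_bdd] by (fastforce simp: z_def)
qed

lemma atLeastAtMost_subset_eint:
  assumes "y \<in> eint \<alpha> \<beta>" "x \<in> eint \<alpha> \<beta>"
  shows "{y..x} \<subseteq> eint \<alpha> \<beta>"
  using assms by (auto simp: eint_def) (meson ereal_less_eq(3) le_less_trans less_le_trans)+

lemma eventually_at_right_ereal_witness_below:
  assumes "eventually P (at_right_ereal \<alpha>)" "x \<in> eint \<alpha> \<beta>"
  shows "\<exists>y\<in>eint \<alpha> \<beta>. y \<le> x \<and> P y"
proof (cases "\<alpha> = -\<infinity>")
  case True
  then obtain N where "\<And>t. t \<le> N \<Longrightarrow> P t"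
    using assms(1) by (auto simp: at_right_ereal_def eventually_at_bot_linorder)
  moreover have "min N x \<in> eint \<alpha> \<beta>"
    using assms(2) True by (auto simp: eint_def min_def) (meson ereal_less_eq(3) le_less_trans)
  ultimately show ?thesis
    by (intro bexI[of _ "min N x"]) auto
next
  case False
  moreover have "\<alpha> \<noteq> \<infinity>"
    using assms(2) by (auto simp: eint_def)
  ultimately obtain r where r: "\<alpha> = ereal r"
    by (cases \<alpha>) auto
  then obtain c where "c > r" and c: "\<And>t. r < t \<Longrightarrow> t < c \<Longrightarrow> P t"
    using assms(1) by (auto simp: at_right_ereal_def eventually_at_right_field)
  define y where "y = (r + min c x) / 2"
  have "r < x"
    using assms(2) r by (auto simp: eint_def)
  then have "r < y" "y < c" "y < x"
    using \<open>c > r\<close> by (auto simp: y_def)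
  moreover from this have "y \<in> eint \<alpha> \<beta>"
    using assms(2) r by (auto simp: eint_def) (meson ereal_less_eq(3) less_imp_le le_less_trans)
  ultimately show ?thesis
    using c by (intro bexI[of _ y]) auto
qed

theorem lemma1:
  fixes \<alpha> \<beta> :: ereal and a b d e h :: "real \<Rightarrow> real"
  assumes "\<alpha> < \<beta>"
    and "\<forall>x\<in>eint \<alpha> \<beta>. a differentiable (at x)"
    and "\<forall>x\<in>eint \<alpha> \<beta>. b differentiable (at x)"
    and "\<forall>x\<in>eint \<alpha> \<beta>. d differentiable (at x)"
    and "\<forall>x\<in>eint \<alpha> \<beta>. e differentiable (at x)"
    and "\<forall>x\<in>eint \<alpha> \<beta>. d x > 0"
    and "\<forall>x\<in>eint \<alpha> \<beta>. e x > 0"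
    and "\<forall>x\<in>eint \<alpha> \<beta>.
           (h has_real_derivative (d x - (b x - a x) * h x - e x * (h x)\<^sup>2)) (at x)"
    and "\<exists>L::real. L > 0 \<and> (h \<longlongrightarrow> L) (at_right_ereal \<alpha>)"
  shows "\<forall>x\<in>eint \<alpha> \<beta>. h x > 0"
proof
  fix x assume x: "x \<in> eint \<alpha> \<beta>"
  obtain L where "L > 0" "(h \<longlongrightarrow> L) (at_right_ereal \<alpha>)"
    using assms(9) by blast
  then have "eventually (\<lambda>t. h t > 0) (at_right_ereal \<alpha>)"
    by (rule order_tendstoD(1)[rotated])
  then obtain y where y: "y \<in> eint \<alpha> \<beta>" "y \<le> x" "h y > 0"
    using eventually_at_right_ereal_witness_below x by blast
  have "{y..x} \<subseteq> eint \<alpha> \<beta>"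
    using atLeastAtMost_subset_eint[OF y(1) x] .
  then have "\<forall>t\<in>{y..x}. h t > 0"
    using assms(6,8) y(3) by (intro deriv_pos_at_zeros_imp_pos[where h' = "\<lambda>t. d t - (b t - a t) * h t - e t * (h t)\<^sup>2"]) auto
  then show "h x > 0"
    using y(2) by simp
qed

end
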